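(* Let $V$ be a real vector space and $C$ a cone in $V$. Suppose $Y$ is a decomposably $C$-antichain-convex subset of $V$ and put $K=\operatorname{co}(C\cup\{0\})$. Then: (1) for each $y\in\operatorname{co}(Y)$ there exists $z\in Y$ with $z\in y+K$; (2) for each $y\in\operatorname{co}(Y)$ there exists $x\in Y$ with $y\in x+K$.
   Context: A cone in a real vector space $V$ is a subset $C$ with $\lambda C\subseteq C$ for all $\lambda>0$ (it may be empty and need not contain $0$). A subset $S\subseteq V$ is $C$-antichain-convex iff for all $x,y\in S$ and $\lambda\in[0,1]$ with $y-x\notin C\cup(-C)$ one has $\lambda x+(1-\lambda)y\in S$. A set $S$ is decomposably $C$-antichain-convex iff $S=S_1+\dots+S_n$ (Minkowski sum) for some finite collection of $C$-antichain-convex subsets $S_1,\dots,S_n$ of $V$. $\operatorname{co}$ denotes the convex hull. *)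

theory Defs
  imports "HOL-Analysis.Analysis"
begin

definition is_cone :: "'a::real_vector set \<Rightarrow> bool" where
  "is_cone C \<longleftrightarrow> (\<forall>t::real. \<forall>c\<in>C. t > 0 \<longrightarrow> t *\<^sub>R c \<in> C)"

definition antichain_convex :: "'a::real_vector set \<Rightarrow> 'a set \<Rightarrow> bool" where
  "antichain_convex C S \<longleftrightarrow>
     (\<forall>x\<in>S. \<forall>y\<in>S. \<forall>t::real. 0 \<le> t \<and> t \<le> 1 \<and> y - x \<notin> C \<union> uminus ` C
        \<longrightarrow> t *\<^sub>R x + (1 - t) *\<^sub>R y \<in> S)"

fun minkowski_sum :: "'a::real_vector set list \<Rightarrow> 'a set" where
  "minkowski_sum [] = {0}"
| "minkowski_sum (A # As) = {a + b | a b. a \<in> A \<and> b \<in> minkowski_sum As}"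

definition decomp_antichain_convex :: "'a::real_vector set \<Rightarrow> 'a set \<Rightarrow> bool" where
  "decomp_antichain_convex C S \<longleftrightarrow>
     (\<exists>Ss. Ss \<noteq> [] \<and> (\<forall>T\<in>set Ss. antichain_convex C T) \<and> S = minkowski_sum Ss)"

end

theory Submission
  imports Defs
begin

text \<open>Let \<open>K\<close> be any convex cone containing \<open>C\<close>. For an antichain-convex \<open>S\<close>, every point of a
segment between \<open>x, y \<in> S\<close> either lies in \<open>S\<close> or, when \<open>y - x \<in> C \<union> -C\<close>, lies above one endpoint
along that very direction; hence \<open>S + K\<close> is convex and contains \<open>co S\<close>. Convex hulls commute
with Minkowski sums and \<open>K + K = K\<close>, so this passes to decomposable sets. Part (2) is the case
\<open>K = co (C \<union> {0})\<close>, and part (1) follows by applying it to \<open>-C\<close> and \<open>-K\<close>, since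
antichain-convexity only depends on \<open>C \<union> -C\<close>.\<close>

lemma minkowski_sum_Cons_set_plus: "minkowski_sum (A # As) = A + minkowski_sum As"
  by (auto simp: set_plus_def)

lemma antichain_convex_uminus_iff: "antichain_convex (uminus ` C) S \<longleftrightarrow> antichain_convex C S"
proof -
  have "uminus ` C \<union> uminus ` uminus ` C = C \<union> uminus ` C"
    by (auto simp: image_image)
  then show ?thesis
    unfolding antichain_convex_def by simp
qed

lemma decomp_antichain_convex_uminus_iff:
  "decomp_antichain_convex (uminus ` C) S \<longleftrightarrow> decomp_antichain_convex C S"
  by (simp add: decomp_antichain_convex_def antichain_convex_uminus_iff)

lemma antichain_convex_segment_in_plus_conic:
  assumes "antichain_convex C S" "conic K" "0 \<in> K" "C \<subseteq> K"
    and "x \<in> S" "y \<in> S" "0 \<le> t" "t \<le> 1"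
  shows "t *\<^sub>R x + (1 - t) *\<^sub>R y \<in> S + K"
proof (cases "y - x \<in> C \<union> uminus ` C")
  case False
  then have "t *\<^sub>R x + (1 - t) *\<^sub>R y \<in> S"
    using assms unfolding antichain_convex_def by blast
  then show ?thesis
    using \<open>0 \<in> K\<close> by (metis add.right_neutral set_plus_intro)
next
  case True
  then consider "y - x \<in> C" | "x - y \<in> C"
    by (metis UnE imageE minus_diff_eq minus_minus)
  then show ?thesis
  proof cases
    case 1
    then have "(1 - t) *\<^sub>R (y - x) \<in> K"
      using assms by (auto intro: conicD)
    with \<open>x \<in> S\<close> have "x + (1 - t) *\<^sub>R (y - x) \<in> S + K"
      by (rule set_plus_intro)
    moreover have "x + (1 - t) *\<^sub>R (y - x) = t *\<^sub>R x + (1 - t) *\<^sub>R y"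
      by (simp add: algebra_simps)
    ultimately show ?thesis
      by simp
  next
    case 2
    then have "t *\<^sub>R (x - y) \<in> K"
      using assms by (auto intro: conicD)
    with \<open>y \<in> S\<close> have "y + t *\<^sub>R (x - y) \<in> S + K"
      by (rule set_plus_intro)
    moreover have "y + t *\<^sub>R (x - y) = t *\<^sub>R x + (1 - t) *\<^sub>R y"
      by (simp add: algebra_simps)
    ultimately show ?thesis
      by simp
  qed
qed

lemma convex_plus_cone_if_antichain_convex:
  assumes S: "antichain_convex C S" and K: "convex_cone K" "C \<subseteq> K"
  shows "convex (S + K)"
proof (rule convexI)
  fix a b and u v :: real
  assume "a \<in> S + K" "b \<in> S + K" and uv: "0 \<le> u" "0 \<le> v" "u + v = 1"
  then obtain x k y l where xk: "x \<in> S" "k \<in> K" "a = x + k" and yl: "y \<in> S" "l \<in> K" "b = y + l"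
    by (auto elim!: set_plus_elim)
  have "conic K" "0 \<in> K"
    using K(1) by (simp_all add: convex_cone_def convex_cone_contains_0)
  moreover have v: "v = 1 - u"
    using uv(3) by simp
  ultimately have "u *\<^sub>R x + v *\<^sub>R y \<in> S + K"
    unfolding v using antichain_convex_segment_in_plus_conic[OF S _ _ K(2) xk(1) yl(1)] uv
    by simp
  then obtain s m where sm: "s \<in> S" "m \<in> K" "u *\<^sub>R x + v *\<^sub>R y = s + m"
    by (auto elim!: set_plus_elim)
  have "u *\<^sub>R a + v *\<^sub>R b = s + (m + (u *\<^sub>R k + v *\<^sub>R l))"
    using xk(3) yl(3) sm(3) by (simp add: algebra_simps)
  moreover have "m + (u *\<^sub>R k + v *\<^sub>R l) \<in> K"
    using K(1) sm(2) xk(2) yl(2) uv by (simp add: convex_cone_add convex_cone_scaleR)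
  ultimately show "u *\<^sub>R a + v *\<^sub>R b \<in> S + K"
    using sm(1) by (simp add: set_plus_intro)
qed

lemma convex_cone_plus_self:
  assumes "convex_cone K"
  shows "K + K = K"
proof
  show "K + K \<subseteq> K"
    using assms by (auto elim!: set_plus_elim simp: convex_cone_add)
  show "K \<subseteq> K + K"
    using assms by (simp add: convex_cone_contains_0 set_zero_plus2)
qed

lemma convex_hull_subset_plus_cone_if_antichain_convex:
  assumes "antichain_convex C S" "convex_cone K" "C \<subseteq> K"
  shows "convex hull S \<subseteq> S + K"
proof (rule hull_minimal)
  show "S \<subseteq> S + K"
    using set_zero_plus2[of K S] convex_cone_contains_0[OF assms(2)] by (simp add: add.commute)
  show "convex (S + K)"
    using assms by (rule convex_plus_cone_if_antichain_convex)
qed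

lemma convex_hull_minkowski_sum_subset_plus_cone:
  assumes "\<forall>T\<in>set Ss. antichain_convex C T" "convex_cone K" "C \<subseteq> K"
  shows "convex hull minkowski_sum Ss \<subseteq> minkowski_sum Ss + K"
  using assms(1)
proof (induction Ss)
  case Nil
  then show ?case
    using convex_cone_contains_0[OF assms(2)] by auto
next
  case (Cons A As)
  let ?M = "minkowski_sum As"
  have "convex hull minkowski_sum (A # As) = convex hull A + convex hull ?M"
    unfolding minkowski_sum_Cons_set_plus by (rule convex_hull_set_plus)
  also have "\<dots> \<subseteq> (A + K) + (?M + K)"
  proof (rule set_plus_mono2)
    show "convex hull A \<subseteq> A + K"
      using Cons.prems convex_hull_subset_plus_cone_if_antichain_convex[OF _ assms(2,3)] by simp
    show "convex hull ?M \<subseteq> ?M + K"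
      using Cons by simp
  qed
  also have "\<dots> = minkowski_sum (A # As) + (K + K)"
    unfolding minkowski_sum_Cons_set_plus by (simp add: ac_simps)
  finally show ?case
    using convex_cone_plus_self[OF assms(2)] by simp
qed

lemma convex_hull_subset_plus_cone_if_decomp_antichain_convex:
  assumes "decomp_antichain_convex C Y" "convex_cone K" "C \<subseteq> K"
  shows "convex hull Y \<subseteq> Y + K"
  using assms convex_hull_minkowski_sum_subset_plus_cone
  unfolding decomp_antichain_convex_def by blast

lemma convex_cone_convex_hull_Un_0:
  assumes "is_cone C"
  shows "convex_cone (convex hull (C \<union> {0}))"
proof -
  have "cone (C \<union> {0})"
    using assms unfolding cone_def is_cone_def by (auto simp: le_less)
  then have "cone (convex hull (C \<union> {0}))"
    by (rule cone_convex_hull)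
  then show ?thesis
    unfolding convex_cone_def conic_def by (auto simp: mem_cone)
qed

theorem theorem3:
  fixes C Y :: "'a::real_vector set"
  assumes "is_cone C"
    and "decomp_antichain_convex C Y"
  defines "K \<equiv> convex hull (C \<union> {0})"
  shows "(\<forall>y\<in>convex hull Y. \<exists>z\<in>Y. z \<in> (\<lambda>k. y + k) ` K)
       \<and> (\<forall>y\<in>convex hull Y. \<exists>x\<in>Y. y \<in> (\<lambda>k. x + k) ` K)"
proof -
  have K: "convex_cone K" "C \<subseteq> K"
    unfolding K_def using convex_cone_convex_hull_Un_0[OF assms(1)]
    by (auto intro: hull_inc)
  then have "convex_cone (uminus ` K)"
    by (simp add: convex_cone_linear_image linear_uminus)
  moreover have "decomp_antichain_convex (uminus ` C) Y"
    using assms(2) by (simp add: decomp_antichain_convex_uminus_iff)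
  ultimately have below: "convex hull Y \<subseteq> Y + uminus ` K"
    using K(2) by (simp add: convex_hull_subset_plus_cone_if_decomp_antichain_convex image_mono)
  have above: "convex hull Y \<subseteq> Y + K"
    using assms(2) K by (rule convex_hull_subset_plus_cone_if_decomp_antichain_convex)
  show ?thesis
  proof safe
    fix y assume "y \<in> convex hull Y"
    with below obtain z k where "z \<in> Y" "k \<in> K" "y = z - k"
      by (auto elim!: set_plus_elim)
    then show "\<exists>z\<in>Y. z \<in> (\<lambda>k. y + k) ` K" by auto
  next
    fix y assume "y \<in> convex hull Y"
    with above obtain x k where "x \<in> Y" "k \<in> K" "y = x + k"
      by (auto elim!: set_plus_elim)
    then show "\<exists>x\<in>Y. y \<in> (\<lambda>k. x + k) ` K" by auto
  qed
qed

end
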